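(* For every $\delta > 0$ there exist win-lose bimatrix games in which no pair of mixed strategies $(\mathbf{p}, \mathbf{q})$ with $|\mathrm{supp}(\mathbf{p})| \le 2$ and $|\mathrm{supp}(\mathbf{q})| \le 2$ is a $(1-\delta)$-well-supported Nash equilibrium.
   Context: A bimatrix game is given by two $m \times n$ payoff matrices $A$ (row player) and $B$ (column player); it is win-lose if all entries lie in $\{0,1\}$. A pair of mixed strategies $(\mathbf{p}, \mathbf{q})$ is an $\epsilon$-well-supported Nash equilibrium if every row $i$ in the support of $\mathbf{p}$ satisfies $\mathbf{e}_i^T A \mathbf{q} \ge \max_\ell \mathbf{e}_\ell^T A \mathbf{q} - \epsilon$, and every column $j$ in the support of $\mathbf{q}$ satisfies $\mathbf{p}^T B \mathbf{e}_j \ge \max_\ell \mathbf{p}^T B \mathbf{e}_\ell - \epsilon$. $\mathrm{supp}$ denotes the set of pure strategies played with positive probability. *)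

theory Defs
  imports Complex_Main
begin

text \<open>An m x n bimatrix game: payoff matrices A (row player), B (column player),
  represented as functions nat => nat => real, relevant on indices i < m, j < n.\<close>

definition win_lose :: "nat \<Rightarrow> nat \<Rightarrow> (nat \<Rightarrow> nat \<Rightarrow> real) \<Rightarrow> bool" where
  "win_lose m n A \<longleftrightarrow> (\<forall>i<m. \<forall>j<n. A i j \<in> {0, 1})"

definition mixed_strategy :: "nat \<Rightarrow> (nat \<Rightarrow> real) \<Rightarrow> bool" where
  "mixed_strategy k p \<longleftrightarrow> (\<forall>i<k. 0 \<le> p i) \<and> (\<forall>i\<ge>k. p i = 0) \<and> (\<Sum>i<k. p i) = 1"

definition supp :: "nat \<Rightarrow> (nat \<Rightarrow> real) \<Rightarrow> nat set" where
  "supp k p = {i. i < k \<and> p i > 0}"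

definition row_payoff :: "nat \<Rightarrow> (nat \<Rightarrow> nat \<Rightarrow> real) \<Rightarrow> (nat \<Rightarrow> real) \<Rightarrow> nat \<Rightarrow> real" where
  "row_payoff n A q i = (\<Sum>j<n. A i j * q j)"

definition col_payoff :: "nat \<Rightarrow> (nat \<Rightarrow> nat \<Rightarrow> real) \<Rightarrow> (nat \<Rightarrow> real) \<Rightarrow> nat \<Rightarrow> real" where
  "col_payoff m B p j = (\<Sum>i<m. p i * B i j)"

definition well_supported_NE ::
  "real \<Rightarrow> nat \<Rightarrow> nat \<Rightarrow> (nat \<Rightarrow> nat \<Rightarrow> real) \<Rightarrow> (nat \<Rightarrow> nat \<Rightarrow> real)
    \<Rightarrow> (nat \<Rightarrow> real) \<Rightarrow> (nat \<Rightarrow> real) \<Rightarrow> bool" where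
  "well_supported_NE \<epsilon> m n A B p q \<longleftrightarrow>
     mixed_strategy m p \<and> mixed_strategy n q \<and>
     (\<forall>i\<in>supp m p. \<forall>l<m. row_payoff n A q i \<ge> row_payoff n A q l - \<epsilon>) \<and>
     (\<forall>j\<in>supp n q. \<forall>l<n. col_payoff m B p j \<ge> col_payoff m B p l - \<epsilon>)"

end

theory Submission
  imports Defs "HOL-Number_Theory.Euler_Criterion"
begin

(* The row player picks a vertex of a tournament, the column player an ordered pair of vertices.
  The row player earns 1 iff her vertex beats both vertices of the pair, the column player earns 1
  iff the row vertex is one of them.  If every four vertices have a common dominator, then against
  two column strategies some row earns 1, so every supported row earns more than 0 and must beat
  both vertices of some supported pair; symmetrically, the pair formed by the two supported rows
  earns 1, so every supported pair contains a supported row.  Hence each of the at most two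
  supported rows beats another one, impossible in a tournament.  The Paley tournament on the
  quadratic residues modulo 67 has the domination property; by its affine symmetries this reduces
  to the sets {0, 1, u, v}, which are checked by computation. *)

lemma supp_nonempty:
  assumes "mixed_strategy k p"
  shows "supp k p \<noteq> {}"
proof
  assume "supp k p = {}"
  with assms have "\<forall>i<k. p i = 0"
    by (force simp: mixed_strategy_def supp_def)
  with assms show False
    by (simp add: mixed_strategy_def)
qed

lemma subset_pair_if_card_le_2:
  assumes "finite X" "card X \<le> 2" "x \<in> X"
  shows "\<exists>y\<in>X. X \<subseteq> {x, y}"
proof (cases "X = {x}")
  case False
  then obtain y where "y \<in> X" "y \<noteq> x"
    using assms(3) by blast
  moreover from calculation have "{x, y} = X"
    using assms by (intro card_seteq) auto
  ultimately show ?thesis by blast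
qed (use assms(3) in simp)

lemma sum_mixed_strategy_eq_1:
  fixes f :: "nat \<Rightarrow> real"
  assumes "mixed_strategy k p" "\<And>i. i \<in> supp k p \<Longrightarrow> f i = 1"
  shows "(\<Sum>i<k. p i * f i) = 1"
proof -
  have "p i * f i = p i" if "i < k" for i
    using assms that by (cases "p i > 0") (auto simp: mixed_strategy_def supp_def not_less)
  then have "(\<Sum>i<k. p i * f i) = (\<Sum>i<k. p i)"
    by (intro sum.cong) auto
  with assms(1) show ?thesis
    by (simp add: mixed_strategy_def)
qed

lemma sum_mixed_strategy_pos_imp_supp:
  fixes f :: "nat \<Rightarrow> real"
  assumes "mixed_strategy k p" "0 < (\<Sum>i<k. p i * f i)"
  shows "\<exists>i\<in>supp k p. f i \<noteq> 0"
proof (rule ccontr)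
  assume none: "\<not> ?thesis"
  have "p i * f i = 0" if "i < k" for i
  proof (cases "p i > 0")
    case True
    with none that show ?thesis by (simp add: supp_def)
  next
    case False
    with assms(1) that show ?thesis by (force simp: mixed_strategy_def)
  qed
  with assms(2) show False
    by simp
qed

(* Column j < N * N stands for the ordered pair of vertices (j div N, j mod N). *)
definition pair_game_row :: "nat \<Rightarrow> (nat \<Rightarrow> nat \<Rightarrow> bool) \<Rightarrow> nat \<Rightarrow> nat \<Rightarrow> real" where
  "pair_game_row N beats i j = (if beats i (j div N) \<and> beats i (j mod N) then 1 else 0)"

definition pair_game_col :: "nat \<Rightarrow> nat \<Rightarrow> nat \<Rightarrow> real" where
  "pair_game_col N i j = (if i = j div N \<or> i = j mod N then 1 else 0)"

lemma wsne_supported_pair_meets_row_support: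
  assumes "well_supported_NE (1 - \<delta>) N (N * N) A (pair_game_col N) p q" "\<delta> > 0"
    and p: "card (supp N p) \<le> 2"
    and j: "j \<in> supp (N * N) q"
  shows "\<exists>i\<in>supp N p. i = j div N \<or> i = j mod N"
proof -
  let ?B = "pair_game_col N"
  have mixed: "mixed_strategy N p"
    using assms(1) by (simp add: well_supported_NE_def)
  obtain a1 where "a1 \<in> supp N p"
    using supp_nonempty[OF mixed] by blast
  then obtain a2 where a: "a1 \<in> supp N p" "a2 \<in> supp N p" "supp N p \<subseteq> {a1, a2}"
    using subset_pair_if_card_le_2[OF _ p] by (auto simp: supp_def)
  then have "a1 < N" "a2 < N" by (auto simp: supp_def)
  define c where "c = a1 * N + a2"
  have "c < Suc a1 * N"
    using \<open>a2 < N\<close> by (simp add: c_def)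
  also have "\<dots> \<le> N * N"
    using \<open>a1 < N\<close> by (intro mult_le_mono1) simp
  finally have c: "c < N * N" "c div N = a1" "c mod N = a2"
    using \<open>a2 < N\<close> by (simp_all add: c_def)
  have "col_payoff N ?B p c = 1"
    unfolding col_payoff_def
    using a(3) c by (intro sum_mixed_strategy_eq_1[OF mixed]) (auto simp: pair_game_col_def)
  then have "0 < (\<Sum>i<N. p i * ?B i j)"
    using assms(1,2) j c(1) by (force simp: well_supported_NE_def col_payoff_def)
  then obtain i where "i \<in> supp N p" "?B i j \<noteq> 0"
    using sum_mixed_strategy_pos_imp_supp[OF mixed, of "\<lambda>i. ?B i j"] by blast
  then show ?thesis
    by (auto simp: pair_game_col_def split: if_splits)
qed

locale dominated_tournament =
  fixes N :: nat and beats :: "nat \<Rightarrow> nat \<Rightarrow> bool"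
  assumes beats_asym: "beats x y \<Longrightarrow> \<not> beats y x"
    and common_dominator: "\<lbrakk>y1 < N; y2 < N; y3 < N; y4 < N\<rbrakk> \<Longrightarrow>
      \<exists>r<N. beats r y1 \<and> beats r y2 \<and> beats r y3 \<and> beats r y4"
begin

lemma wsne_supported_row_beats_supported_pair:
  assumes "well_supported_NE (1 - \<delta>) N (N * N) (pair_game_row N beats) B p q" "\<delta> > 0"
    and q: "card (supp (N * N) q) \<le> 2"
    and i: "i \<in> supp N p"
  shows "\<exists>j\<in>supp (N * N) q. beats i (j div N) \<and> beats i (j mod N)"
proof -
  let ?A = "pair_game_row N beats"
  have mixed: "mixed_strategy (N * N) q"
    using assms(1) by (simp add: well_supported_NE_def)
  have vertices: "j div N < N" "j mod N < N" if "j \<in> supp (N * N) q" for j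
    using that by (auto simp: supp_def less_mult_imp_div_less intro!: mod_less_divisor gr0I)
  obtain c1 where "c1 \<in> supp (N * N) q"
    using supp_nonempty[OF mixed] by blast
  then obtain c2 where c: "c1 \<in> supp (N * N) q" "c2 \<in> supp (N * N) q" "supp (N * N) q \<subseteq> {c1, c2}"
    using subset_pair_if_card_le_2[OF _ q] by (auto simp: supp_def)
  obtain r where r: "r < N" "beats r (c1 div N)" "beats r (c1 mod N)"
      "beats r (c2 div N)" "beats r (c2 mod N)"
    using common_dominator vertices c(1,2) by meson
  have "row_payoff (N * N) ?A q r = 1"
    unfolding row_payoff_def mult.commute[of "?A r _"]
    using c(3) r by (intro sum_mixed_strategy_eq_1[OF mixed]) (auto simp: pair_game_row_def)
  then have "0 < (\<Sum>j<N * N. q j * ?A i j)"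
    using assms(1,2) i r(1) by (force simp: well_supported_NE_def row_payoff_def mult.commute)
  then obtain j where "j \<in> supp (N * N) q" "?A i j \<noteq> 0"
    using sum_mixed_strategy_pos_imp_supp[OF mixed] by blast
  then show ?thesis
    by (auto simp: pair_game_row_def split: if_splits)
qed

lemma no_wsne_with_supports_le_2:
  assumes "\<delta> > 0" "card (supp N p) \<le> 2" "card (supp (N * N) q) \<le> 2"
  shows "\<not> well_supported_NE (1 - \<delta>) N (N * N) (pair_game_row N beats) (pair_game_col N) p q"
proof
  assume wsne: "well_supported_NE (1 - \<delta>) N (N * N) (pair_game_row N beats) (pair_game_col N) p q"
  have successor: "\<exists>i'\<in>supp N p. beats i i'" if "i \<in> supp N p" for i
    using wsne_supported_row_beats_supported_pair[OF wsne assms(1,3) that]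
      wsne_supported_pair_meets_row_support[OF wsne assms(1,2)] by metis
  have "supp N p \<noteq> {}"
    using wsne supp_nonempty by (simp add: well_supported_NE_def)
  then obtain a1 a2 where a: "a1 \<in> supp N p" "supp N p \<subseteq> {a1, a2}"
    using subset_pair_if_card_le_2[OF _ assms(2)] by (fastforce simp: supp_def)
  obtain i2 where i2: "i2 \<in> supp N p" "beats a1 i2"
    using successor[OF a(1)] by blast
  obtain i3 where i3: "i3 \<in> supp N p" "beats i2 i3"
    using successor[OF i2(1)] by blast
  have "a1 \<noteq> i2" "i2 \<noteq> i3"
    using i2(2) i3(2) beats_asym by blast+
  with a(2) i2(1) i3(1) have "i3 = a1"
    by auto
  with i2(2) i3(2) beats_asym show False
    by blast
qed

end

lemma Legendre_cong:
  assumes "[a = b] (mod m)"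
  shows "Legendre a m = Legendre b m"
proof -
  have "[y\<^sup>2 = a] (mod m) \<longleftrightarrow> [y\<^sup>2 = b] (mod m)" for y
    using assms cong_sym cong_trans by blast
  moreover have "[a = 0] (mod m) \<longleftrightarrow> [b = 0] (mod m)"
    using assms cong_sym cong_trans by blast
  ultimately show ?thesis
    by (simp add: Legendre_def QuadRes_def)
qed

lemma Legendre_one:
  assumes "1 < m"
  shows "Legendre 1 m = 1"
proof -
  have "\<not> [1 = 0] (mod m)"
    using assms by (simp add: cong_def)
  moreover have "QuadRes m 1"
    unfolding QuadRes_def by (rule exI[of _ 1]) simp
  ultimately show ?thesis
    by (simp add: Legendre_def)
qed

lemma Legendre_cases: "Legendre a m \<in> {-1, 0, 1}"
  by (simp add: Legendre_def)

lemma cong_sign_imp_eq: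
  fixes x y :: int
  assumes "x \<in> {-1, 0, 1}" "y \<in> {-1, 0, 1}" "[x = y] (mod m)" "2 < m"
  shows "x = y"
proof -
  have "m dvd x - y"
    using assms(3) by (simp add: cong_iff_dvd_diff)
  moreover have "\<bar>x - y\<bar> < m"
    using assms(1,2,4) by auto
  ultimately show ?thesis
    using dvd_imp_le_int[of "x - y" m] by force
qed

definition paley_beats :: "nat \<Rightarrow> int \<Rightarrow> int \<Rightarrow> bool" where
  "paley_beats p x y \<longleftrightarrow> Legendre (y - x) p = 1"

lemma paley_beats_cong:
  fixes x y x' y' :: int
  assumes "[x = x'] (mod p)" "[y = y'] (mod p)"
  shows "paley_beats p x y \<longleftrightarrow> paley_beats p x' y'"
  using Legendre_cong[OF cong_diff[OF assms(2,1)]] by (simp add: paley_beats_def)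

context
  fixes p :: nat
  assumes p: "prime p" "2 < p"
begin

lemma Legendre_eq_iff_euler:
  assumes "x \<in> {-1, 0, 1}"
  shows "Legendre a p = x \<longleftrightarrow> [a ^ ((p - 1) div 2) = x] (mod p)"
proof -
  have euler: "[Legendre a p = a ^ ((p - 1) div 2)] (mod p)"
    using euler_criterion p by blast
  show ?thesis
  proof
    assume "Legendre a p = x"
    with euler show "[a ^ ((p - 1) div 2) = x] (mod p)"
      by (simp add: cong_sym)
  next
    assume "[a ^ ((p - 1) div 2) = x] (mod p)"
    with euler have "[Legendre a p = x] (mod p)"
      by (rule cong_trans)
    with assms p(2) show "Legendre a p = x"
      by (intro cong_sign_imp_eq[OF Legendre_cases]) auto
  qed
qed

lemma Legendre_mult: "Legendre (a * b) p = Legendre a p * Legendre b p"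
proof -
  let ?k = "(p - 1) div 2"
  have "[Legendre a p * Legendre b p = a ^ ?k * b ^ ?k] (mod p)"
    using euler_criterion p by (blast intro: cong_mult)
  then have "[Legendre a p * Legendre b p = (a * b) ^ ?k] (mod p)"
    by (simp add: power_mult_distrib)
  moreover have "Legendre a p * Legendre b p \<in> {-1, 0, 1}"
    using Legendre_cases[of a p] Legendre_cases[of b p] by auto
  ultimately show ?thesis
    using Legendre_eq_iff_euler by (metis cong_sym)
qed

lemma Legendre_eq_1_imp_invertible:
  assumes "Legendre a p = 1"
  obtains b where "[a * b = 1] (mod p)"
proof -
  have "\<not> int p dvd a"
    using assms by (auto simp: Legendre_def cong_0_iff)
  then have "coprime a p"
    using p(1) by (metis prime_imp_coprime prime_nat_int_transfer coprime_commute)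
  then show ?thesis
    using cong_solve_coprime_int that by blast
qed

lemma Legendre_minus_one:
  assumes "p mod 4 = 3"
  shows "Legendre (-1) p = -1"
proof -
  have "odd ((p - 1) div 2)"
    using assms by presburger
  then show ?thesis
    by (simp add: Legendre_eq_iff_euler)
qed

lemma Legendre_uminus:
  assumes "p mod 4 = 3"
  shows "Legendre (- a) p = - Legendre a p"
  using Legendre_mult[of "-1" a] by (simp add: Legendre_minus_one[OF assms])

lemma paley_beats_asym:
  assumes "p mod 4 = 3" "paley_beats p x y"
  shows "\<not> paley_beats p y x"
  using assms Legendre_uminus[of "y - x"] by (simp add: paley_beats_def)

lemma paley_beats_affine:
  assumes "Legendre a p = 1"
  shows "paley_beats p (a * x + c) (a * y + c) \<longleftrightarrow> paley_beats p x y"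
proof -
  have "a * y + c - (a * x + c) = a * (y - x)"
    by (simp add: algebra_simps)
  with assms show ?thesis
    by (simp add: paley_beats_def Legendre_mult)
qed

lemma paley_dominator_of_arc:
  assumes normalized: "\<And>u v. \<exists>w. \<forall>y\<in>{0, 1, u, v}. paley_beats p w y"
    and "paley_beats p x1 x2"
  shows "\<exists>w. \<forall>y\<in>{x1, x2, x3, x4}. paley_beats p w y"
proof -
  define a where "a = x2 - x1"
  have a: "Legendre a p = 1"
    using assms(2) by (simp add: paley_beats_def a_def)
  then obtain b where b: "[a * b = 1] (mod p)"
    by (rule Legendre_eq_1_imp_invertible)
  have rescale: "[a * (b * (x - x1)) + x1 = x] (mod p)" for x
  proof -
    have "[a * b * (x - x1) = 1 * (x - x1)] (mod p)"
      using b by (rule cong_scalar_right)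
    from cong_add[OF this cong_refl[of x1]] show ?thesis
      by (simp add: mult.assoc)
  qed
  obtain w where w: "\<forall>y\<in>{0, 1, b * (x3 - x1), b * (x4 - x1)}. paley_beats p w y"
    using normalized by blast
  have beats: "paley_beats p (a * w + x1) (a * y + x1)"
    if "y \<in> {0, 1, b * (x3 - x1), b * (x4 - x1)}" for y
    using w that paley_beats_affine[OF a] by blast
  have "paley_beats p (a * w + x1) x1" "paley_beats p (a * w + x1) x2"
    using beats[of 0] beats[of 1] by (simp_all add: a_def)
  moreover have "paley_beats p (a * w + x1) x3" "paley_beats p (a * w + x1) x4"
    using beats[of "b * (x3 - x1)"] beats[of "b * (x4 - x1)"]
      paley_beats_cong[OF cong_refl rescale] by simp_all
  ultimately show ?thesis
    by blast
qed

lemma paley_common_dominator: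
  assumes "p mod 4 = 3"
    and normalized: "\<And>u v. \<exists>w. \<forall>y\<in>{0, 1, u, v}. paley_beats p w y"
  shows "\<exists>w. \<forall>y\<in>{x1, x2, x3, x4}. paley_beats p w y"
proof -
  consider "Legendre (x2 - x1) p = 1" | "Legendre (x2 - x1) p = -1" | "Legendre (x2 - x1) p = 0"
    using Legendre_cases by blast
  then show ?thesis
  proof cases
    case 1
    then show ?thesis
      using paley_dominator_of_arc[OF normalized] by (simp add: paley_beats_def)
  next
    case 2
    then have "paley_beats p x2 x1"
      using Legendre_uminus[OF assms(1), of "x2 - x1"] by (simp add: paley_beats_def)
    then show ?thesis
      using paley_dominator_of_arc[OF normalized, of x2 x1 x3 x4] by (simp add: insert_commute)
  next
    case 3
    then have same: "[x2 = x1] (mod p)"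
      by (simp add: Legendre_def cong_iff_dvd_diff cong_0_iff split: if_splits)
    have "paley_beats p x1 (x1 + 1)"
      using Legendre_one p(2) by (simp add: paley_beats_def)
    then obtain w where "\<forall>y\<in>{x1, x1 + 1, x3, x4}. paley_beats p w y"
      using paley_dominator_of_arc[OF normalized] by blast
    then show ?thesis
      using paley_beats_cong[OF cong_refl same] by auto
  qed
qed

end

lemma prime_67: "prime (67::nat)"
  by code_simp

(* Bit r is set iff r is a nonzero square modulo 67; bit lookups keep the computations below fast. *)
definition residue_mask_67 :: int where
  "residue_mask_67 = 61808106872519771730"

lemma list_all_upto_imp_mod:
  fixes m :: int
  assumes "list_all P [0..m - 1]" "0 < m"
  shows "P (a mod m)"
proof -
  have "a mod m \<in> set [0..m - 1]"
    using assms(2) by simp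
  with assms show ?thesis
    by (simp add: list_all_iff)
qed

lemma paley_beats_67_iff: "paley_beats 67 x y \<longleftrightarrow> bit residue_mask_67 (nat ((y - x) mod 67))"
proof -
  define a where "a = y - x"
  let ?P = "\<lambda>r. r ^ 33 mod 67 = 1 \<longleftrightarrow> bit residue_mask_67 (nat r)"
  have "list_all ?P [0..66]"
    unfolding residue_mask_67_def by code_simp
  then have "?P (a mod 67)"
    using list_all_upto_imp_mod[of ?P 67 a] by simp
  moreover have "paley_beats 67 x y \<longleftrightarrow> [a ^ 33 = 1] (mod 67)"
    using Legendre_eq_iff_euler[OF prime_67, of 1 a] by (simp add: paley_beats_def a_def)
  ultimately show ?thesis
    by (simp add: cong_def power_mod a_def)
qed

definition dominators_of_0_1_67 :: "int list" where
  "dominators_of_0_1_67 = [3, 8, 12, 13, 28, 31, 32, 42, 43, 44, 45, 46, 51, 52, 53, 58]"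

lemma paley_67_normalized_dominator: "\<exists>w. \<forall>y\<in>{0, 1, u, v}. paley_beats 67 w y"
proof -
  have "list_all (\<lambda>z. paley_beats 67 z 0 \<and> paley_beats 67 z 1) dominators_of_0_1_67"
    unfolding paley_beats_67_iff residue_mask_67_def dominators_of_0_1_67_def
    by code_simp
  moreover have "list_all (\<lambda>u. list_all (\<lambda>v. list_ex (\<lambda>z. paley_beats 67 z u \<and> paley_beats 67 z v)
      dominators_of_0_1_67) [0..66]) [0..66]"
    unfolding paley_beats_67_iff residue_mask_67_def dominators_of_0_1_67_def
    by code_simp
  then have "list_ex (\<lambda>z. paley_beats 67 z (u mod 67) \<and> paley_beats 67 z (v mod 67)) dominators_of_0_1_67"
    using list_all_upto_imp_mod[of _ 67 u] list_all_upto_imp_mod[of _ 67 v] by (simp add: list_all_iff)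
  ultimately obtain z where "paley_beats 67 z 0" "paley_beats 67 z 1"
      "paley_beats 67 z (u mod 67)" "paley_beats 67 z (v mod 67)"
    by (auto simp: list_all_iff list_ex_iff)
  moreover have "paley_beats 67 z (t mod 67) \<longleftrightarrow> paley_beats 67 z t" for t
    by (rule paley_beats_cong) (simp_all add: cong_def)
  ultimately show ?thesis
    by auto
qed

lemma dominated_tournament_paley_67:
  "dominated_tournament 67 (\<lambda>x y. paley_beats 67 (int x) (int y))"
proof
  fix x y :: nat
  show "paley_beats 67 x y \<Longrightarrow> \<not> paley_beats 67 y x"
    using paley_beats_asym[OF prime_67] by simp
next
  fix y1 y2 y3 y4 :: nat
  obtain w where w: "\<forall>y\<in>{int y1, int y2, int y3, int y4}. paley_beats 67 w y"
    using paley_common_dominator[OF prime_67 _ _ paley_67_normalized_dominator] by fastforce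
  have "paley_beats 67 (int (nat (w mod 67))) y \<longleftrightarrow> paley_beats 67 w y" for y
    by (rule paley_beats_cong) (simp_all add: cong_def)
  with w show "\<exists>r<67. paley_beats 67 (int r) (int y1) \<and> paley_beats 67 (int r) (int y2) \<and>
      paley_beats 67 (int r) (int y3) \<and> paley_beats 67 (int r) (int y4)"
    by (intro exI[of _ "nat (w mod 67)"]) auto
qed

theorem theorem2:
  fixes \<delta> :: real
  assumes "\<delta> > 0"
  shows "\<exists>m n A B. m \<ge> 1 \<and> n \<ge> 1 \<and> win_lose m n A \<and> win_lose m n B \<and>
           (\<forall>p q. mixed_strategy m p \<and> mixed_strategy n q \<and>
                  card (supp m p) \<le> 2 \<and> card (supp n q) \<le> 2 \<longrightarrow>
                  \<not> well_supported_NE (1 - \<delta>) m n A B p q)"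
proof -
  let ?beats = "\<lambda>x y. paley_beats 67 (int x) (int y)"
  interpret dominated_tournament 67 ?beats
    by (rule dominated_tournament_paley_67)
  have "win_lose 67 (67 * 67) (pair_game_row 67 ?beats)" "win_lose 67 (67 * 67) (pair_game_col 67)"
    by (simp_all add: win_lose_def pair_game_row_def pair_game_col_def)
  with no_wsne_with_supports_le_2[OF assms] show ?thesis
    by (intro exI[of _ 67] exI[of _ "67 * 67"] exI[of _ "pair_game_row 67 ?beats"]
        exI[of _ "pair_game_col 67"]) auto
qed

end
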